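(* Let $\tau=\{\tau_1,\dots,\tau_n\}$ with $\tau_i=(T_i,C_i,D_i)$, $0<C_i\le D_i\le T_i$, let $m'$ be a positive integer, and let $R=\langle\Pi,\Theta,m'\rangle$ be an MPR model with $U_\tau<\Theta/\Pi$, where $U_\tau=\sum_{i=1}^n C_i/T_i$. Fix $k\in\{1,\dots,n\}$. Define - $C_\Sigma$ as the sum of the $m'-1$ largest values among $C_1,\dots,C_n$; - $U=\sum_{i=1}^n (T_i-D_i)\,C_i/T_i$; - $B=\frac{\Theta}{\Pi}\big[2+2(\Pi-\Theta/m')\big]$. If there is a real $A_k\ge0$ with $\mathrm{dem}_k(A_k+D_k,m')>\mathrm{sbf}_R(A_k+D_k)$, then there is such an $A_k\ge 0$ that also satisfies $$A_k<\frac{C_\Sigma+m'C_k-D_k\left(\frac{\Theta}{\Pi}-U_\tau\right)+U+B}{\frac{\Theta}{\Pi}-U_\tau}.$$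
   Context: MPR model: $R=\langle\Pi,\Theta,m'\rangle$ with $\Pi>0$, $m'$ a positive integer and $0\le\Theta\le m'\Pi$. A supply pattern of $R$ is a piecewise-constant function $s:[0,\infty)\to\{0,1,\dots,m'\}$ with $\int_{j\Pi}^{(j+1)\Pi}s(t)\,dt=\Theta$ for every integer $j\ge0$. Then $$\mathrm{sbf}_R(t)=\inf\Big\{\int_{t_0}^{t_0+t}s(u)\,du: s\text{ a supply pattern of }R,\ t_0\ge0\Big\}.$$ Demand bound: for $t\ge0$ let $$CI_i(t)=\min\Big\{C_i,\max\Big\{0,\;t-\Big\lfloor\tfrac{t+T_i-D_i}{T_i}\Big\rfloor T_i\Big\}\Big\},\qquad W_i(t)=\Big\lfloor\tfrac{t+T_i-D_i}{T_i}\Big\rfloor C_i+CI_i(t).$$ Fix $k$ and $A\ge0$, and put $t=A+D_k$. For $i\ne k$ define $$\bar I_i=\min\{W_i(t),\,t-C_k\},\qquad \hat I_i=\min\{W_i(t)-CI_i(t),\,t-C_k\},$$ and for $i=k$ define $$\bar I_k=\min\{W_k(t)-C_k,\,A\},\qquad \hat I_k=\min\{W_k(t)-C_k-CI_k(t),\,A\}.$$ Then $$\mathrm{dem}_k(A+D_k,m')=m'C_k+\sum_{i=1}^n\hat I_i+S,$$ where $S$ is the sum of the $m'-1$ largest values among $\{\bar I_i-\hat I_i\}_{i=1}^n$ (all of them if $n\le m'-1$; $S=0$ if $m'=1$). $C_\Sigma$ is defined analogously: the sum of all $C_i$ if $n\le m'-1$, and $0$ if $m'=1$. *)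

theory Defs
  imports "HOL-Analysis.Analysis"
begin

text \<open>Tasks are indexed 1..n by functions T C D :: nat => real.\<close>

definition CI :: "real \<Rightarrow> real \<Rightarrow> real \<Rightarrow> real \<Rightarrow> real" where
  "CI Ti Ci Di t = min Ci (max 0 (t - of_int \<lfloor>(t + Ti - Di) / Ti\<rfloor> * Ti))"

definition W :: "real \<Rightarrow> real \<Rightarrow> real \<Rightarrow> real \<Rightarrow> real" where
  "W Ti Ci Di t = of_int \<lfloor>(t + Ti - Di) / Ti\<rfloor> * Ci + CI Ti Ci Di t"

text \<open>Ibar / Ihat of task i at t = A + D k (so A = t - D k).\<close>
definition Ibar :: "(nat \<Rightarrow> real) \<Rightarrow> (nat \<Rightarrow> real) \<Rightarrow> (nat \<Rightarrow> real) \<Rightarrow> nat \<Rightarrow> real \<Rightarrow> nat \<Rightarrow> real" where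
  "Ibar T C D k t i =
     (if i = k then min (W (T k) (C k) (D k) t - C k) (t - D k)
      else min (W (T i) (C i) (D i) t) (t - C k))"

definition Ihat :: "(nat \<Rightarrow> real) \<Rightarrow> (nat \<Rightarrow> real) \<Rightarrow> (nat \<Rightarrow> real) \<Rightarrow> nat \<Rightarrow> real \<Rightarrow> nat \<Rightarrow> real" where
  "Ihat T C D k t i =
     (if i = k then min (W (T k) (C k) (D k) t - C k - CI (T k) (C k) (D k) t) (t - D k)
      else min (W (T i) (C i) (D i) t - CI (T i) (C i) (D i) t) (t - C k))"

definition top_sum :: "nat \<Rightarrow> (nat \<Rightarrow> real) \<Rightarrow> nat \<Rightarrow> real" where
  "top_sum j f n = sum_list (take j (rev (sort (map f [1..<Suc n]))))"

definition dem :: "(nat \<Rightarrow> real) \<Rightarrow> (nat \<Rightarrow> real) \<Rightarrow> (nat \<Rightarrow> real) \<Rightarrow> nat \<Rightarrow> nat \<Rightarrow> real \<Rightarrow> nat \<Rightarrow> real" where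
  "dem T C D n k t m' =
     real m' * C k + (\<Sum>i=1..n. Ihat T C D k t i)
     + top_sum (m' - 1) (\<lambda>i. Ibar T C D k t i - Ihat T C D k t i) n"

definition piecewise_constant_nonneg :: "(real \<Rightarrow> nat) \<Rightarrow> bool" where
  "piecewise_constant_nonneg s \<longleftrightarrow>
     (\<forall>b\<ge>0. \<exists>P. finite P \<and>
        (\<forall>x y. 0 \<le> x \<longrightarrow> x \<le> y \<longrightarrow> y \<le> b \<longrightarrow> {x..y} \<inter> P = {} \<longrightarrow> s x = s y))"

definition supply_pattern :: "real \<Rightarrow> real \<Rightarrow> nat \<Rightarrow> (real \<Rightarrow> nat) \<Rightarrow> bool" where
  "supply_pattern Per Theta m s \<longleftrightarrow>
     piecewise_constant_nonneg s \<and> (\<forall>t\<ge>0. s t \<le> m) \<and>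
     (\<forall>j::nat. integral {real j * Per .. (real j + 1) * Per} (\<lambda>u. real (s u)) = Theta)"

definition sbf :: "real \<Rightarrow> real \<Rightarrow> nat \<Rightarrow> real \<Rightarrow> real" where
  "sbf Per Theta m t =
     Inf {integral {t0 .. t0 + t} (\<lambda>u. real (s u)) | s t0. supply_pattern Per Theta m s \<and> t0 \<ge> 0}"

end

theory Submission
  imports Defs
begin

(* Demand grows at most at rate U_tau: the jobs of task i in a window of length t contribute
   at most (t + T_i - D_i) C_i / T_i, and the m' - 1 carry-in corrections at most C_Sigma.
   Supply grows at least at rate Theta/Pi: extend the window on both sides to whole periods,
   which deliver exactly Theta each; each added piece of length l lies in one period, so it
   delivers at most min(Theta, m' l) <= (Theta/Pi)(l + Pi - Theta/m'). Since U_tau < Theta/Pi,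
   demand can exceed supply only before these two linear bounds cross, which bounds A_k. *)

lemma list_all2_le_insort_right:
  fixes y :: "'a::linorder"
  assumes "sorted (a # xs)" "a \<le> y"
  shows "list_all2 (\<le>) (a # xs) (insort y xs)"
  using assms
proof (induction xs arbitrary: a)
  case (Cons b xs)
  then show ?case by (cases "y \<le> b") (auto simp: list_all2_refl)
qed simp

lemma insort_mono_elem:
  fixes x y :: "'a::linorder"
  assumes "x \<le> y" "sorted xs"
  shows "list_all2 (\<le>) (insort x xs) (insort y xs)"
  using assms
proof (induction xs)
  case (Cons a xs)
  then show ?case
    using list_all2_le_insort_right[of a xs y]
    by (cases "x \<le> a"; cases "y \<le> a") (auto simp: list_all2_refl)
qed simp

lemma list_all2_le_insort_left:
  fixes x :: "'a::linorder"
  assumes "list_all2 (\<le>) xs ys" "sorted xs" "sorted (b # ys)" "x \<le> b"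
  shows "list_all2 (\<le>) (insort x xs) (b # ys)"
  using assms
proof (induction xs ys arbitrary: b rule: list_all2_induct)
  case (Cons a xs c ys)
  then show ?case by (cases "x \<le> a") auto
qed simp

lemma insort_mono_list:
  fixes x :: "'a::linorder"
  assumes "list_all2 (\<le>) xs ys" "sorted xs" "sorted ys"
  shows "list_all2 (\<le>) (insort x xs) (insort x ys)"
  using assms
proof (induction xs ys rule: list_all2_induct)
  case (Cons a xs b ys)
  show ?case
  proof (cases "x \<le> b")
    case True
    then have "list_all2 (\<le>) (insort x xs) (b # ys)"
      using Cons by (intro list_all2_le_insort_left) auto
    with True Cons show ?thesis by auto
  qed (use Cons in auto)
qed simp

lemma sort_mono:
  fixes xs ys :: "'a::linorder list"
  assumes "list_all2 (\<le>) xs ys"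
  shows "list_all2 (\<le>) (sort xs) (sort ys)"
  using assms
proof (induction xs ys rule: list_all2_induct)
  case (Cons x xs y ys)
  have "list_all2 (\<le>) (insort x (sort xs)) (insort x (sort ys))"
    using Cons.IH by (simp add: insort_mono_list)
  moreover have "list_all2 (\<le>) (insort x (sort ys)) (insort y (sort ys))"
    using Cons.hyps by (simp add: insort_mono_elem)
  ultimately show ?case
    by (auto intro: list_all2_trans[of "(\<le>)" "(\<le>)" "(\<le>)"] order_trans)
qed simp

lemma sum_list_mono_list_all2:
  fixes xs ys :: "'a::ordered_comm_monoid_add list"
  shows "list_all2 (\<le>) xs ys \<Longrightarrow> sum_list xs \<le> sum_list ys"
  by (induction xs ys rule: list_all2_induct) (auto intro: add_mono)

lemma top_sum_mono:
  assumes "\<And>i. i \<in> {1..n} \<Longrightarrow> f i \<le> g i"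
  shows "top_sum j f n \<le> top_sum j g n"
proof -
  have "list_all2 (\<le>) (map f [1..<Suc n]) (map g [1..<Suc n])"
    using assms by (auto simp: list_all2_conv_all_nth simp del: upt_Suc)
  then have "list_all2 (\<le>) (take j (rev (sort (map f [1..<Suc n])))) (take j (rev (sort (map g [1..<Suc n]))))"
    by (intro list_all2_takeI list_all2_rev[THEN iffD2] sort_mono)
  then show ?thesis
    unfolding top_sum_def by (rule sum_list_mono_list_all2)
qed

lemma CI_le: "CI Ti Ci Di t \<le> Ci"
  unfolding CI_def by simp

lemma CI_nonneg: "0 \<le> Ci \<Longrightarrow> 0 \<le> CI Ti Ci Di t"
  unfolding CI_def by simp

lemma W_minus_CI_le:
  assumes "0 \<le> Ci" "0 < Ti"
  shows "W Ti Ci Di t - CI Ti Ci Di t \<le> (t + Ti - Di) * Ci / Ti"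
proof -
  have "of_int \<lfloor>(t + Ti - Di) / Ti\<rfloor> * Ci \<le> (t + Ti - Di) / Ti * Ci"
    using assms by (intro mult_right_mono) auto
  then show ?thesis
    unfolding W_def by simp
qed

lemma Ihat_le:
  assumes "0 \<le> C i" "0 < T i"
  shows "Ihat T C D k t i \<le> (t + T i - D i) * C i / T i - (if i = k then C k else 0)"
  using W_minus_CI_le[OF assms, of "D i" t] unfolding Ihat_def by (auto simp: min_def)

lemma Ibar_minus_Ihat_le: "0 \<le> C i \<Longrightarrow> Ibar T C D k t i - Ihat T C D k t i \<le> C i"
  using CI_le[of "T i" "C i" "D i" t] CI_nonneg[of "C i" "T i" "D i" t]
  unfolding Ibar_def Ihat_def by (auto simp: min_def)

lemma dem_le_linear:
  assumes tasks: "\<forall>i\<in>{1..n}. 0 < C i \<and> C i \<le> D i \<and> D i \<le> T i" and "k \<in> {1..n}"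
  shows "dem T C D n k t m \<le> real m * C k + t * (\<Sum>i=1..n. C i / T i)
      + (\<Sum>i=1..n. (T i - D i) * C i / T i) - C k + top_sum (m - 1) C n"
proof -
  have pos: "0 < C i" "0 < T i" if "i \<in> {1..n}" for i
    using tasks that by (meson order_less_le_trans)+
  have "(\<Sum>i=1..n. Ihat T C D k t i) \<le> (\<Sum>i=1..n. (t + T i - D i) * C i / T i - (if i = k then C k else 0))"
    using pos by (intro sum_mono Ihat_le) (auto intro: less_imp_le)
  also have "\<dots> = (\<Sum>i=1..n. t * (C i / T i) + (T i - D i) * C i / T i) - C k"
  proof -
    have "(t + T i - D i) * C i / T i = t * (C i / T i) + (T i - D i) * C i / T i" for i
      by (metis add_diff_eq add_divide_distrib distrib_right times_divide_eq_right)
    then show ?thesis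
      using \<open>k \<in> {1..n}\<close> by (simp add: sum_subtractf)
  qed
  also have "\<dots> = t * (\<Sum>i=1..n. C i / T i) + (\<Sum>i=1..n. (T i - D i) * C i / T i) - C k"
    by (simp add: sum.distrib sum_distrib_left)
  finally have "(\<Sum>i=1..n. Ihat T C D k t i) \<le> \<dots>" .
  moreover have "top_sum (m - 1) (\<lambda>i. Ibar T C D k t i - Ihat T C D k t i) n \<le> top_sum (m - 1) C n"
    using pos by (intro top_sum_mono Ibar_minus_Ihat_le less_imp_le)
  ultimately show ?thesis
    unfolding dem_def by linarith
qed

lemma floor_divide_eq_period_index:
  fixes Per u :: real
  assumes "Per > 0" "real j * Per \<le> u" "u < (real j + 1) * Per"
  shows "\<lfloor>u / Per\<rfloor> = int j"
  using assms by (simp add: floor_eq_iff field_simps)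

lemma period_index_bounds:
  fixes Per u :: real
  assumes "Per > 0" "0 \<le> u"
  shows "real (nat \<lfloor>u / Per\<rfloor>) * Per \<le> u" "u < (real (nat \<lfloor>u / Per\<rfloor>) + 1) * Per"
proof -
  have "real (nat \<lfloor>u / Per\<rfloor>) = of_int \<lfloor>u / Per\<rfloor>"
    using assms by simp
  then show "real (nat \<lfloor>u / Per\<rfloor>) * Per \<le> u" "u < (real (nat \<lfloor>u / Per\<rfloor>) + 1) * Per"
    using floor_divide_lower[OF assms(1), of u] floor_divide_upper[OF assms(1), of u] by auto
qed

(* A non-integrable function has integral 0, so the period condition forces integrability only when Theta is nonzero. *)
lemma supply_pattern_has_integral_period:
  assumes "supply_pattern Per Theta m s" "Theta \<noteq> 0"
  shows "((\<lambda>u. real (s u)) has_integral Theta) {real j * Per .. (real j + 1) * Per}"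
proof -
  have "integral {real j * Per .. (real j + 1) * Per} (\<lambda>u. real (s u)) = Theta"
    using assms(1) unfolding supply_pattern_def by blast
  moreover from this assms(2) have "(\<lambda>u. real (s u)) integrable_on {real j * Per .. (real j + 1) * Per}"
    using not_integrable_integral by fastforce
  ultimately show ?thesis
    using has_integral_integrable_integral by blast
qed

lemma supply_pattern_has_integral_periods:
  assumes s: "supply_pattern Per Theta m s" "Theta \<noteq> 0" and "Per \<ge> 0" and "j0 \<le> j1"
  shows "((\<lambda>u. real (s u)) has_integral ((real j1 - real j0) * Theta)) {real j0 * Per .. real j1 * Per}"
  using \<open>j0 \<le> j1\<close>
proof (induction j1 rule: dec_induct)
  case (step j)
  have "real j0 * Per \<le> real j * Per"
    using step \<open>Per \<ge> 0\<close> by (simp add: mult_right_mono)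
  then have "((\<lambda>u. real (s u)) has_integral (real j - real j0) * Theta + Theta) {real j0 * Per .. real (Suc j) * Per}"
    using step supply_pattern_has_integral_period[OF s, of j] \<open>Per \<ge> 0\<close>
    by (intro has_integral_combine[of _ "real j * Per"]) (auto simp: algebra_simps mult_right_mono)
  then show ?case by (simp add: algebra_simps)
qed (simp add: has_integral_refl)

lemma supply_pattern_integrable:
  assumes s: "supply_pattern Per Theta m s" "Theta \<noteq> 0" and "Per > 0" and "0 \<le> x"
  shows "(\<lambda>u. real (s u)) integrable_on {x..y}"
proof (cases "x \<le> y")
  case True
  define N where "N = nat \<lceil>y / Per\<rceil>"
  have "y \<le> real N * Per"
    using \<open>Per > 0\<close> unfolding N_def by (simp add: pos_divide_le_eq[symmetric] real_nat_ceiling_ge)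
  moreover have "(\<lambda>u. real (s u)) integrable_on {0 .. real N * Per}"
    using supply_pattern_has_integral_periods[OF s, of 0 N] \<open>Per > 0\<close> by (auto dest: has_integral_integrable)
  ultimately show ?thesis
    using True \<open>0 \<le> x\<close> by (elim integrable_subinterval_real) auto
qed (simp add: integrable_on_empty)

lemma min_budget_capacity_le:
  fixes Per Theta m l :: real
  assumes "Per > 0" "m > 0" "0 \<le> Theta" "Theta \<le> m * Per"
  shows "min Theta (m * l) \<le> Theta / Per * l + Theta / Per * (Per - Theta / m)"
proof -
  define rate where "rate = Theta / Per"
  have Theta_eq: "Theta = rate * Per" and "0 \<le> rate" "rate \<le> m"
    using assms unfolding rate_def by (auto simp: field_simps)
  have "min Theta (m * l) \<le> rate * l + rate * (Per - Theta / m)"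
  proof (cases "m * l \<le> Theta")
    case True
    then have "(m - rate) * l \<le> (m - rate) * (Theta / m)"
      using \<open>rate \<le> m\<close> \<open>m > 0\<close> by (intro mult_left_mono) (auto simp: field_simps)
    also have "\<dots> = rate * (Per - Theta / m)"
      using \<open>m > 0\<close> by (simp add: Theta_eq field_simps)
    finally show ?thesis
      using True by (simp add: algebra_simps)
  next
    case False
    have "rate * (Theta / m) \<le> rate * l"
      using False \<open>0 \<le> rate\<close> \<open>m > 0\<close> by (intro mult_left_mono) (auto simp: field_simps)
    then show ?thesis
      using False by (simp add: Theta_eq algebra_simps)
  qed
  then show ?thesis
    unfolding rate_def .
qed

lemma supply_pattern_integral_within_period_le:
  assumes s: "supply_pattern Per Theta m s" and "Theta > 0" "Per > 0" "m > 0" "Theta \<le> m * Per"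
    and xy: "real j * Per \<le> x" "x \<le> y" "y \<le> (real j + 1) * Per"
  shows "integral {x..y} (\<lambda>u. real (s u)) \<le> Theta / Per * (y - x) + Theta / Per * (Per - Theta / m)"
proof -
  let ?f = "\<lambda>u. real (s u)"
  let ?a = "real j * Per" and ?b = "(real j + 1) * Per"
  have "0 \<le> ?a" using \<open>Per > 0\<close> by simp
  have int: "?f integrable_on {u..v}" if "?a \<le> u" for u v
    using \<open>Theta > 0\<close> \<open>Per > 0\<close> order_trans[OF \<open>0 \<le> ?a\<close> that]
    by (intro supply_pattern_integrable[OF s]) auto
  have nonneg: "0 \<le> integral {u..v} ?f" if "?a \<le> u" for u v
    using int[OF that] by (rule integral_nonneg) simp
  have "integral {?a..x} ?f + integral {x..y} ?f + integral {y..?b} ?f = integral {?a..?b} ?f"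
    using xy int by (simp add: Henstock_Kurzweil_Integration.integral_combine)
  also have "\<dots> = Theta"
    using s unfolding supply_pattern_def by blast
  finally have le_Theta: "integral {x..y} ?f \<le> Theta"
    using nonneg[of ?a x] nonneg[of y ?b] xy by linarith
  have "integral {x..y} ?f \<le> integral {x..y} (\<lambda>u. real m)"
  proof (rule integral_le[OF int])
    show "real (s u) \<le> real m" if "u \<in> {x..y}" for u
      using s \<open>0 \<le> ?a\<close> xy that unfolding supply_pattern_def by auto
  qed (use xy in auto)
  then have "integral {x..y} ?f \<le> min Theta (m * (y - x))"
    using le_Theta xy by (simp add: mult.commute)
  then show ?thesis
    using min_budget_capacity_le[of Per m Theta "y - x"] assms(2-5) by linarith
qed

lemma supply_pattern_integral_ge_linear:
  assumes s: "supply_pattern Per Theta m s" and "Theta > 0" "Per > 0" "m > 0" "Theta \<le> m * Per"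
    and "0 \<le> t0" "0 \<le> t"
  shows "Theta / Per * (t - 2 * (Per - Theta / m)) \<le> integral {t0..t0 + t} (\<lambda>u. real (s u))"
proof -
  let ?f = "\<lambda>u. real (s u)"
  define rate where "rate = Theta / Per"
  define slack where "slack = rate * (Per - Theta / m)"
  define j0 where "j0 = nat \<lfloor>t0 / Per\<rfloor>"
  define j1 where "j1 = nat \<lfloor>(t0 + t) / Per\<rfloor>"
  have j0: "real j0 * Per \<le> t0" "t0 \<le> (real j0 + 1) * Per"
    using period_index_bounds[OF \<open>Per > 0\<close> \<open>0 \<le> t0\<close>] unfolding j0_def by auto
  have j1: "real j1 * Per \<le> t0 + t" "t0 + t \<le> (real j1 + 1) * Per"
    using period_index_bounds[of Per "t0 + t"] \<open>Per > 0\<close> \<open>0 \<le> t0\<close> \<open>0 \<le> t\<close>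
    unfolding j1_def by auto
  have "j0 \<le> Suc j1"
    unfolding j0_def j1_def using \<open>Per > 0\<close> \<open>0 \<le> t\<close>
    by (intro le_SucI nat_mono floor_mono divide_right_mono) auto
  then have "integral {real j0 * Per .. (real j1 + 1) * Per} ?f = (real j1 + 1 - real j0) * Theta"
    using integral_unique[OF supply_pattern_has_integral_periods[OF s, of j0 "Suc j1"]] \<open>Theta > 0\<close> \<open>Per > 0\<close>
    by (simp add: algebra_simps)
  also have "\<dots> = rate * ((real j1 + 1) * Per - real j0 * Per)"
    using \<open>Per > 0\<close> unfolding rate_def by (simp add: field_simps)
  finally have whole: "integral {real j0 * Per .. (real j1 + 1) * Per} ?f = rate * ((real j1 + 1) * Per - real j0 * Per)" .
  have head: "integral {real j0 * Per .. t0} ?f \<le> rate * (t0 - real j0 * Per) + slack"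
    unfolding rate_def slack_def using j0 assms(2-5) by (intro supply_pattern_integral_within_period_le[OF s]) auto
  have tail: "integral {t0 + t .. (real j1 + 1) * Per} ?f \<le> rate * ((real j1 + 1) * Per - (t0 + t)) + slack"
    unfolding rate_def slack_def using j1 assms(2-5) by (intro supply_pattern_integral_within_period_le[OF s]) auto
  have "0 \<le> real j0 * Per"
    using \<open>Per > 0\<close> by simp
  then have int: "?f integrable_on {u..v}" if "real j0 * Per \<le> u" for u v
    using \<open>Theta > 0\<close> \<open>Per > 0\<close> order_trans[OF _ that]
    by (intro supply_pattern_integrable[OF s]) auto
  have "integral {real j0 * Per .. t0} ?f + integral {t0..t0 + t} ?f + integral {t0 + t .. (real j1 + 1) * Per} ?f
      = integral {real j0 * Per .. (real j1 + 1) * Per} ?f"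
    using j0 j1 int \<open>0 \<le> t\<close> by (simp add: Henstock_Kurzweil_Integration.integral_combine)
  with whole head tail have "rate * t - 2 * slack \<le> integral {t0..t0 + t} ?f"
    by (simp add: algebra_simps)
  moreover have "Theta / Per * (t - 2 * (Per - Theta / m)) = rate * t - 2 * slack"
    unfolding slack_def rate_def by (simp add: algebra_simps)
  ultimately show ?thesis
    by linarith
qed

(* Witnesses that the infimum defining sbf ranges over a nonempty set. *)
definition front_loaded_supply :: "real \<Rightarrow> real \<Rightarrow> nat \<Rightarrow> real \<Rightarrow> nat" where
  "front_loaded_supply Per Theta m u = (if u - Per * of_int \<lfloor>u / Per\<rfloor> < Theta / m then m else 0)"

lemma front_loaded_supply_has_integral_period:
  assumes "Per > 0" "m > 0" "0 \<le> Theta" "Theta \<le> m * Per"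
  shows "((\<lambda>u. real (front_loaded_supply Per Theta m u)) has_integral Theta) {real j * Per .. (real j + 1) * Per}"
proof -
  let ?f = "\<lambda>u. real (front_loaded_supply Per Theta m u)"
  define a where "a = real j * Per"
  define b where "b = (real j + 1) * Per"
  define c where "c = a + Theta / m"
  have "a \<le> c" "c \<le> b"
    using assms unfolding a_def b_def c_def by (auto simp: field_simps)
  have f_eq: "?f u = (if u < c then m else 0)" if "a \<le> u" "u < b" for u
  proof -
    have "\<lfloor>u / Per\<rfloor> = int j"
      using floor_divide_eq_period_index \<open>Per > 0\<close> that unfolding a_def b_def by blast
    then show ?thesis
      unfolding front_loaded_supply_def c_def a_def by (simp add: algebra_simps)
  qed
  have "(?f has_integral m * (c - a)) {a..c}"
  proof (rule has_integral_spike_finite[where S = "{c}" and f = "\<lambda>u. real m"])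
    show "((\<lambda>u. real m) has_integral m * (c - a)) {a..c}"
      using has_integral_const_real[of "real m" a c] \<open>a \<le> c\<close> by (simp add: mult.commute)
  qed (use f_eq \<open>c \<le> b\<close> in auto)
  moreover have "(?f has_integral 0) {c..b}"
    by (rule has_integral_spike_finite[where S = "{b}" and f = "\<lambda>u. 0"]) (use f_eq \<open>a \<le> c\<close> in auto)
  ultimately have "(?f has_integral m * (c - a) + 0) {a..b}"
    using \<open>a \<le> c\<close> \<open>c \<le> b\<close> by (intro has_integral_combine)
  then show ?thesis
    using \<open>m > 0\<close> unfolding a_def b_def c_def by simp
qed

lemma front_loaded_supply_piecewise_constant:
  assumes "Per > 0"
  shows "piecewise_constant_nonneg (front_loaded_supply Per Theta m)"
  unfolding piecewise_constant_nonneg_def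
proof (intro allI impI)
  fix b :: real
  define N where "N = nat \<lceil>b / Per\<rceil>"
  define P where "P = (\<lambda>j. real j * Per) ` {..N} \<union> (\<lambda>j. real j * Per + Theta / m) ` {..N}"
  have le_N: "j \<le> N" if "real j * Per \<le> b" for j
  proof -
    have "real j \<le> b / Per"
      using that \<open>Per > 0\<close> by (simp add: field_simps)
    then show ?thesis
      unfolding N_def by linarith
  qed
  have "front_loaded_supply Per Theta m x = front_loaded_supply Per Theta m y"
    if xy: "0 \<le> x" "x \<le> y" "y \<le> b" "{x..y} \<inter> P = {}" for x y
  proof -
    define j where "j = nat \<lfloor>x / Per\<rfloor>"
    have jx: "real j * Per \<le> x" "x < (real j + 1) * Per"
      using period_index_bounds[OF \<open>Per > 0\<close> \<open>0 \<le> x\<close>] unfolding j_def by auto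
    have "y < (real j + 1) * Per"
    proof (rule ccontr)
      assume "\<not> y < (real j + 1) * Per"
      then have "real (Suc j) * Per \<in> {x..y}" "Suc j \<le> N"
        using jx xy le_N[of "Suc j"] by (auto simp: algebra_simps)
      with xy show False
        unfolding P_def by blast
    qed
    then have floors: "\<lfloor>x / Per\<rfloor> = int j" "\<lfloor>y / Per\<rfloor> = int j"
      using floor_divide_eq_period_index[OF \<open>Per > 0\<close>] jx xy by auto
    have "(x - Per * j < Theta / m) = (y - Per * j < Theta / m)"
    proof (rule ccontr)
      assume "(x - Per * j < Theta / m) \<noteq> (y - Per * j < Theta / m)"
      then have "real j * Per + Theta / m \<in> {x..y}" "j \<le> N"
        using jx xy le_N[of j] by (auto simp: algebra_simps)
      with xy show False
        unfolding P_def by blast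
    qed
    then show ?thesis
      unfolding front_loaded_supply_def floors by simp
  qed
  moreover have "finite P"
    unfolding P_def by simp
  ultimately show "\<exists>P. finite P \<and> (\<forall>x y. 0 \<le> x \<longrightarrow> x \<le> y \<longrightarrow> y \<le> b \<longrightarrow> {x..y} \<inter> P = {} \<longrightarrow>
      front_loaded_supply Per Theta m x = front_loaded_supply Per Theta m y)"
    by blast
qed

lemma supply_pattern_front_loaded_supply:
  assumes "Per > 0" "m > 0" "0 \<le> Theta" "Theta \<le> m * Per"
  shows "supply_pattern Per Theta m (front_loaded_supply Per Theta m)"
  unfolding supply_pattern_def
proof (intro conjI allI impI)
  show "piecewise_constant_nonneg (front_loaded_supply Per Theta m)"
    using \<open>Per > 0\<close> by (rule front_loaded_supply_piecewise_constant)
  show "front_loaded_supply Per Theta m t \<le> m" for t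
    unfolding front_loaded_supply_def by simp
  show "integral {real j * Per .. (real j + 1) * Per} (\<lambda>u. real (front_loaded_supply Per Theta m u)) = Theta" for j
    using front_loaded_supply_has_integral_period[OF assms] by (rule integral_unique)
qed

lemma sbf_ge_linear:
  assumes "Per > 0" "m > 0" "0 < Theta" "Theta \<le> m * Per" "0 \<le> t"
  shows "Theta / Per * (t - 2 * (Per - Theta / m)) \<le> sbf Per Theta m t"
  unfolding sbf_def
proof (rule cInf_greatest)
  have "supply_pattern Per Theta m (front_loaded_supply Per Theta m)"
    using assms by (intro supply_pattern_front_loaded_supply) auto
  then show "{integral {t0..t0 + t} (\<lambda>u. real (s u)) |s t0. supply_pattern Per Theta m s \<and> 0 \<le> t0} \<noteq> {}"
    by blast
next
  fix x
  assume "x \<in> {integral {t0..t0 + t} (\<lambda>u. real (s u)) |s t0. supply_pattern Per Theta m s \<and> 0 \<le> t0}"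
  then obtain s t0 where "x = integral {t0..t0 + t} (\<lambda>u. real (s u))" "supply_pattern Per Theta m s" "0 \<le> t0"
    by blast
  then show "Theta / Per * (t - 2 * (Per - Theta / m)) \<le> x"
    using supply_pattern_integral_ge_linear assms by simp
qed

theorem theorem2:
  fixes T C D :: "nat \<Rightarrow> real" and n k m' :: nat and Per Theta :: real
  assumes tasks: "\<forall>i\<in>{1..n}. 0 < C i \<and> C i \<le> D i \<and> D i \<le> T i"
    and m_pos: "m' > 0"
    and Pi_pos: "Per > 0"
    and Theta_bounds: "0 \<le> Theta" "Theta \<le> real m' * Per"
    and util: "(\<Sum>i=1..n. C i / T i) < Theta / Per"
    and k_in: "k \<in> {1..n}"
    and ex: "\<exists>A\<ge>0. dem T C D n k (A + D k) m' > sbf Per Theta m' (A + D k)"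
  shows "\<exists>A\<ge>0. dem T C D n k (A + D k) m' > sbf Per Theta m' (A + D k) \<and>
           A < (top_sum (m' - 1) C n + real m' * C k
                 - D k * (Theta / Per - (\<Sum>i=1..n. C i / T i))
                 + (\<Sum>i=1..n. (T i - D i) * C i / T i)
                 + Theta / Per * (2 + 2 * (Per - Theta / real m')))
               / (Theta / Per - (\<Sum>i=1..n. C i / T i))"
proof -
  obtain A where "A \<ge> 0" and miss: "dem T C D n k (A + D k) m' > sbf Per Theta m' (A + D k)"
    using ex by blast
  define u where "u = (\<Sum>i=1..n. C i / T i)"
  define rate where "rate = Theta / Per"
  have "0 \<le> u"
    unfolding u_def using tasks by (intro sum_nonneg divide_nonneg_nonneg) (fastforce dest: bspec)+
  moreover have "u < rate"
    using util unfolding u_def rate_def .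
  ultimately have "0 < rate"
    by linarith
  with Pi_pos have "Theta > 0"
    unfolding rate_def by (simp add: zero_less_divide_iff)
  have "0 < C k" "C k \<le> D k"
    using tasks k_in by auto
  then have "rate * (A + D k - 2 * (Per - Theta / m')) \<le> sbf Per Theta m' (A + D k)"
    using sbf_ge_linear[OF Pi_pos m_pos \<open>Theta > 0\<close> Theta_bounds(2)] \<open>A \<ge> 0\<close> unfolding rate_def by simp
  with miss dem_le_linear[OF tasks k_in, of "A + D k" m'] \<open>0 < C k\<close> \<open>0 < rate\<close>
  have "A * (rate - u) < top_sum (m' - 1) C n + real m' * C k - D k * (rate - u)
      + (\<Sum>i=1..n. (T i - D i) * C i / T i) + rate * (2 + 2 * (Per - Theta / real m'))"
    unfolding u_def by (simp add: algebra_simps)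
  with \<open>u < rate\<close> show ?thesis
    using \<open>A \<ge> 0\<close> miss unfolding u_def rate_def by (auto simp: pos_less_divide_eq)
qed

end
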